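(* Let $f:\mathbb{R}^n\to\mathbb{R}$ be continuously differentiable and bounded below, let $s$ be an integer with $0<s<n$, and let $\{\mathbf{x}^k\}$ be the sequence generated by the greedy sparse-simplex method. Then any accumulation point of $\{\mathbf{x}^k\}$ is a CW-minimum of the problem (P): minimize $f(\mathbf{x})$ subject to $\|\mathbf{x}\|_0\le s$.
   Context: $\|\mathbf{x}\|_0$ is the number of nonzero components, $C_s=\{\mathbf{x}:\|\mathbf{x}\|_0\le s\}$, $I_1(\mathbf{x})=\{i:x_i\neq0\}$, $\mathbf{e}_i$ the $i$-th standard basis vector. Greedy sparse-simplex method (all one-dimensional minima below are assumed attained): choose $\mathbf{x}^0\in C_s$. At step $k$: if $\|\mathbf{x}^k\|_0<s$, for each $i=1,\dots,n$ let $t_i\in\operatorname{argmin}_{t\in\mathbb{R}}f(\mathbf{x}^k+t\mathbf{e}_i)$ and $f_i=\min_t f(\mathbf{x}^k+t\mathbf{e}_i)$; let $i_k\in\operatorname{argmin}_i f_i$; if $f_{i_k}<f(\mathbf{x}^k)$ set $\mathbf{x}^{k+1}=\mathbf{x}^k+t_{i_k}\mathbf{e}_{i_k}$, otherwise stop. If $\|\mathbf{x}^k\|_0=s$, for each $i\in I_1(\mathbf{x}^k)$ and $j=1,\dots,n$ let $t_{i,j}\in\operatorname{argmin}_t f(\mathbf{x}^k-x_i^k\mathbf{e}_i+t\mathbf{e}_j)$ and $f_{i,j}=\min_t f(\mathbf{x}^k-x_i^k\mathbf{e}_i+t\mathbf{e}_j)$; let $(i_k,j_k)\in\operatorname{argmin}\{f_{i,j}:i\in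 I_1(\mathbf{x}^k),j=1,\dots,n\}$; if $f_{i_k,j_k}<f(\mathbf{x}^k)$ set $\mathbf{x}^{k+1}=\mathbf{x}^k-x^k_{i_k}\mathbf{e}_{i_k}+t_{i_k,j_k}\mathbf{e}_{j_k}$, otherwise stop. A feasible $\mathbf{x}^*$ is a coordinate-wise (CW) minimum of (P) if either $\|\mathbf{x}^*\|_0<s$ and $f(\mathbf{x}^* )=\min_t f(\mathbf{x}^*+t\mathbf{e}_i)$ for all $i$; or $\|\mathbf{x}^*\|_0=s$ and $f(\mathbf{x}^* )\le\min_t f(\mathbf{x}^*-x_i^*\mathbf{e}_i+t\mathbf{e}_j)$ for all $i\in I_1(\mathbf{x}^* )$, $j=1,\dots,n$. *)

theory Defs
  imports "HOL-Analysis.Analysis"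
begin

text \<open>Vectors in R^n are modelled as real^'n, with n = CARD('n).\<close>

definition l0norm :: "real^'n \<Rightarrow> nat" where
  "l0norm x = card {i. x $ i \<noteq> 0}"

definition I1 :: "real^'n \<Rightarrow> 'n set" where
  "I1 x = {i. x $ i \<noteq> 0}"

definition ee :: "'n \<Rightarrow> real^'n" where
  "ee i = axis i 1"

text \<open>One admissible iteration of the greedy sparse-simplex method from x to x'
  (only the case where the method does not stop).\<close>
definition gss_step :: "(real^'n \<Rightarrow> real) \<Rightarrow> nat \<Rightarrow> real^'n \<Rightarrow> real^'n \<Rightarrow> bool" where
  "gss_step f s x x' \<longleftrightarrow>
     (l0norm x < s \<and>
       (\<exists>i0 t0.
          (\<forall>t. f (x + t0 *\<^sub>R ee i0) \<le> f (x + t *\<^sub>R ee i0)) \<and>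
          (\<forall>i t. f (x + t0 *\<^sub>R ee i0) \<le> f (x + t *\<^sub>R ee i)) \<and>
          f (x + t0 *\<^sub>R ee i0) < f x \<and>
          x' = x + t0 *\<^sub>R ee i0))
   \<or> (l0norm x = s \<and>
       (\<exists>i0 j0 t0. i0 \<in> I1 x \<and>
          (\<forall>t. f (x - (x $ i0) *\<^sub>R ee i0 + t0 *\<^sub>R ee j0)
                \<le> f (x - (x $ i0) *\<^sub>R ee i0 + t *\<^sub>R ee j0)) \<and>
          (\<forall>i\<in>I1 x. \<forall>j t. f (x - (x $ i0) *\<^sub>R ee i0 + t0 *\<^sub>R ee j0)
                \<le> f (x - (x $ i) *\<^sub>R ee i + t *\<^sub>R ee j)) \<and>
          f (x - (x $ i0) *\<^sub>R ee i0 + t0 *\<^sub>R ee j0) < f x \<and>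
          x' = x - (x $ i0) *\<^sub>R ee i0 + t0 *\<^sub>R ee j0))"

definition is_min1 :: "(real \<Rightarrow> real) \<Rightarrow> real \<Rightarrow> bool" where
  "is_min1 g v \<longleftrightarrow> (\<exists>t. g t = v) \<and> (\<forall>t. v \<le> g t)"

definition CW_min :: "(real^'n \<Rightarrow> real) \<Rightarrow> nat \<Rightarrow> real^'n \<Rightarrow> bool" where
  "CW_min f s x \<longleftrightarrow>
     (l0norm x < s \<and> (\<forall>i. is_min1 (\<lambda>t. f (x + t *\<^sub>R ee i)) (f x)))
   \<or> (l0norm x = s \<and> (\<forall>i\<in>I1 x. \<forall>j. \<forall>t. f x \<le> f (x - (x $ i) *\<^sub>R ee i + t *\<^sub>R ee j)))"

end

theory Submission
  imports Defs "HOL-Library.Infinite_Set"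
begin

text \<open>The objective values decrease strictly along the iterates and are bounded below, so they
  converge; hence along a subsequence converging to the accumulation point, both the values at
  the iterates and at their successors tend to the value at the limit. Passing to a further
  subsequence on which the support is a fixed set S, every candidate move that the greedy step
  compares against (a one-coordinate change, or a swap removing some i \<in> S) depends
  continuously on the iterate, and the inequality "successor value \<le> candidate value" survives
  in the limit. If the limit has fewer than s nonzeros while |S| = s, some i \<in> S vanishes at
  the limit and swaps at i are exactly one-coordinate changes.\<close>

lemma l0norm_eq_card_I1: "l0norm x = card (I1 x)"
  by (simp add: l0norm_def I1_def)

lemma gss_step_decreasing: "gss_step f s x x' \<Longrightarrow> f x' < f x"
  unfolding gss_step_def by auto

lemma gss_step_l0norm_le: "gss_step f s x x' \<Longrightarrow> l0norm x \<le> s"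
  unfolding gss_step_def by auto

lemma gss_step_le_coordinate_move:
  assumes "gss_step f s x x'" "l0norm x < s"
  shows "f x' \<le> f (x + t *\<^sub>R ee i)"
  using assms unfolding gss_step_def by auto

lemma gss_step_le_swap:
  assumes "gss_step f s x x'" "l0norm x = s" "i \<in> I1 x"
  shows "f x' \<le> f (x - (x $ i) *\<^sub>R ee i + t *\<^sub>R ee j)"
  using assms unfolding gss_step_def by auto

lemma CW_min_if_coordinatewise_min:
  assumes "l0norm x < s" "\<And>i t. f x \<le> f (x + t *\<^sub>R ee i)"
  shows "CW_min f s x"
proof -
  have "is_min1 (\<lambda>t. f (x + t *\<^sub>R ee i)) (f x)" for i
    unfolding is_min1_def using assms(2)[where i = i] by (metis add.right_neutral scale_zero_left)
  then show ?thesis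
    using assms(1) unfolding CW_min_def by blast
qed

lemma strict_mono_constant_subseq:
  fixes h :: "nat \<Rightarrow> 'a"
  assumes "finite (range h)"
  obtains q :: "nat \<Rightarrow> nat" and c where "strict_mono q" "\<And>k. h (q k) = c"
proof -
  from pigeonhole_infinite[OF infinite_UNIV_nat assms]
  obtain k0 where "infinite {k. h k = h k0}"
    by auto
  from infinite_enumerate[OF this]
  obtain q :: "nat \<Rightarrow> nat" where "strict_mono q" "\<forall>k. q k \<in> {k. h k = h k0}"
    by blast
  then show thesis
    using that[of q "h k0"] by blast
qed

lemma decseq_subseq_Suc_tendsto:
  fixes a :: "nat \<Rightarrow> real" and q :: "nat \<Rightarrow> nat"
  assumes "decseq a" "bdd_below (range a)" "strict_mono q" "(\<lambda>k. a (q k)) \<longlonglongrightarrow> l"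
  shows "(\<lambda>k. a (Suc (q k))) \<longlonglongrightarrow> l"
proof -
  obtain B where "\<And>k. B \<le> a k"
    using assms(2) unfolding bdd_below_def by auto
  then obtain L where L: "a \<longlonglongrightarrow> L"
    using decseq_convergent[OF assms(1)] by blast
  have "(\<lambda>k. a (q k)) \<longlonglongrightarrow> L"
    using LIMSEQ_subseq_LIMSEQ[OF L assms(3)] by (simp add: comp_def)
  then have "L = l"
    using assms(4) LIMSEQ_unique by blast
  have "strict_mono (Suc \<circ> q)"
    using assms(3) by (simp add: strict_mono_def)
  then have "(a \<circ> (Suc \<circ> q)) \<longlonglongrightarrow> L"
    by (rule LIMSEQ_subseq_LIMSEQ[OF L])
  then show ?thesis
    unfolding \<open>L = l\<close> comp_def .
qed

lemma I1_limit_subset: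
  assumes "y \<longlonglongrightarrow> z" "\<And>k. I1 (y k) = S"
  shows "I1 z \<subseteq> S"
proof
  fix i
  assume "i \<in> I1 z"
  show "i \<in> S"
  proof (rule ccontr)
    assume "i \<notin> S"
    then have "(\<lambda>k. y k $ i) = (\<lambda>k. 0)"
      using assms(2) unfolding I1_def by auto
    moreover have "(\<lambda>k. y k $ i) \<longlonglongrightarrow> z $ i"
      using assms(1) by (rule tendsto_vec_nth)
    ultimately have "z $ i = 0"
      using LIMSEQ_const_iff by metis
    with \<open>i \<in> I1 z\<close> show False
      unfolding I1_def by simp
  qed
qed

lemma coordinate_min_at_limit:
  assumes cont: "\<And>v. isCont f v"
    and y: "y \<longlonglongrightarrow> z" and succ: "(\<lambda>k. f (y' k)) \<longlonglongrightarrow> f z"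
    and steps: "\<And>k. gss_step f s (y k) (y' k)" and small: "\<And>k. l0norm (y k) < s"
  shows "f z \<le> f (z + t *\<^sub>R ee i)"
proof -
  have "(\<lambda>k. f (y k + t *\<^sub>R ee i)) \<longlonglongrightarrow> f (z + t *\<^sub>R ee i)"
    by (intro isCont_tendsto_compose[OF cont] tendsto_intros y)
  then show ?thesis
    using LIMSEQ_le[OF succ] gss_step_le_coordinate_move[OF steps small] by blast
qed

lemma swap_min_at_limit:
  assumes cont: "\<And>v. isCont f v"
    and y: "y \<longlonglongrightarrow> z" and succ: "(\<lambda>k. f (y' k)) \<longlonglongrightarrow> f z"
    and steps: "\<And>k. gss_step f s (y k) (y' k)" and full: "\<And>k. l0norm (y k) = s"
    and supp: "\<And>k. i \<in> I1 (y k)"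
  shows "f z \<le> f (z - (z $ i) *\<^sub>R ee i + t *\<^sub>R ee j)"
proof -
  have "(\<lambda>k. y k $ i) \<longlonglongrightarrow> z $ i"
    using y by (rule tendsto_vec_nth)
  then have "(\<lambda>k. f (y k - (y k $ i) *\<^sub>R ee i + t *\<^sub>R ee j))
      \<longlonglongrightarrow> f (z - (z $ i) *\<^sub>R ee i + t *\<^sub>R ee j)"
    by (intro isCont_tendsto_compose[OF cont] tendsto_intros y)
  then show ?thesis
    using LIMSEQ_le[OF succ] gss_step_le_swap[OF steps full supp] by blast
qed

lemma CW_min_at_limit_of_constant_support:
  assumes cont: "\<And>v. isCont f v"
    and y: "y \<longlonglongrightarrow> z" and succ: "(\<lambda>k. f (y' k)) \<longlonglongrightarrow> f z"
    and steps: "\<And>k. gss_step f s (y k) (y' k)" and supp: "\<And>k. I1 (y k) = S"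
  shows "CW_min f s z"
proof -
  have S_le: "card S \<le> s"
    using gss_step_l0norm_le[OF steps] supp by (metis l0norm_eq_card_I1)
  have z_S: "I1 z \<subseteq> S"
    using y supp by (rule I1_limit_subset)
  then have z_le: "l0norm z \<le> card S"
    by (simp add: l0norm_eq_card_I1 card_mono)
  consider (small) "card S < s" | (full) "card S = s"
    using S_le by linarith
  then show ?thesis
  proof cases
    case small
    then have "\<And>k. l0norm (y k) < s"
      using supp by (simp add: l0norm_eq_card_I1)
    then show ?thesis
      using z_le small
      by (intro CW_min_if_coordinatewise_min coordinate_min_at_limit[OF cont y succ steps]) auto
  next
    case full
    have y_full: "\<And>k. l0norm (y k) = s"
      using full supp by (simp add: l0norm_eq_card_I1)
    have swap: "f z \<le> f (z - (z $ i) *\<^sub>R ee i + t *\<^sub>R ee j)" if "i \<in> S" for i j t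
      using swap_min_at_limit[OF cont y succ steps y_full] supp that by blast
    show ?thesis
    proof (cases "I1 z = S")
      case True
      then show ?thesis
        using full swap unfolding CW_min_def l0norm_eq_card_I1 by blast
    next
      case False
      then obtain i where "i \<in> S" "z $ i = 0"
        using z_S unfolding I1_def by auto
      moreover have "l0norm z < s"
        using False z_S full by (metis l0norm_eq_card_I1 card_subset_eq finite order_le_less z_le)
      ultimately show ?thesis
        using swap[where i = i] by (intro CW_min_if_coordinatewise_min) auto
    qed
  qed
qed

theorem theorem3p3:
  fixes f :: "real^'n \<Rightarrow> real" and s :: nat and x :: "nat \<Rightarrow> real^'n" and xs :: "real^'n"
  assumes C1: "\<exists>f' :: (real^'n) \<Rightarrow> ((real^'n) \<Rightarrow>\<^sub>L real).
                 (\<forall>y. (f has_derivative blinfun_apply (f' y)) (at y)) \<and> continuous_on UNIV f'"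
    and bdd: "bdd_below (range f)"
    and s_pos: "0 < s" and s_lt: "s < CARD('n)"
    and attained: "\<And>y i. \<exists>t0. \<forall>t. f (y + t0 *\<^sub>R ee i) \<le> f (y + t *\<^sub>R ee i)"
    and x0: "l0norm (x 0) \<le> s"
    and steps: "\<And>k. gss_step f s (x k) (x (Suc k))"
    and acc: "\<exists>r. strict_mono r \<and> (x \<circ> r) \<longlonglongrightarrow> xs"
  shows "CW_min f s xs"
proof -
  obtain f' where "\<forall>y. (f has_derivative blinfun_apply (f' y)) (at y)"
    using C1 by blast
  then have cont: "\<And>v. isCont f v"
    using has_derivative_continuous by blast
  obtain r where r: "strict_mono r" "(x \<circ> r) \<longlonglongrightarrow> xs"
    using acc by blast
  have "finite (range (\<lambda>k. I1 (x (r k))))"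
    by simp
  then obtain q :: "nat \<Rightarrow> nat" and S where q: "strict_mono q" and supp: "\<And>k. I1 (x (r (q k))) = S"
    by (rule strict_mono_constant_subseq) blast
  have y: "(\<lambda>k. x (r (q k))) \<longlonglongrightarrow> xs"
    using LIMSEQ_subseq_LIMSEQ[OF r(2) q] by (simp add: comp_def)
  have "decseq (\<lambda>k. f (x k))"
    using gss_step_decreasing[OF steps] by (intro decseq_SucI less_imp_le)
  moreover have "bdd_below (range (\<lambda>k. f (x k)))"
    using bdd by (rule bdd_below_mono) auto
  moreover have "strict_mono (\<lambda>k. r (q k))"
    using r(1) q by (simp add: strict_mono_def)
  moreover have "(\<lambda>k. f (x (r (q k)))) \<longlonglongrightarrow> f xs"
    using isCont_tendsto_compose[OF cont y] .
  ultimately have "(\<lambda>k. f (x (Suc (r (q k))))) \<longlonglongrightarrow> f xs"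
    by (rule decseq_subseq_Suc_tendsto)
  then show ?thesis
    using CW_min_at_limit_of_constant_support[OF cont y _ steps supp] by blast
qed

end
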